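(* Let $r \le n$ and $p \ge r$ be positive integers. Let $V \in \mathbb{R}^{n \times r}$, let $W \in \mathbb{R}^{n \times p}$, let $h: \mathbb{R}^{r} \to \mathbb{R}^{p}$ be any (feature) map, and define the correction map $H: \mathbb{R}^r \to \mathbb{R}^n$ by $H(z) = W h(z)$. Consider the set $$\mathcal{M}_r(V, H) = \{ V z + W h(z) \,:\, z \in \mathbb{R}^{r} \} \subset \mathbb{R}^{n}.$$ Let $Q = [q^{(1)}, \dots, q^{(k)}] \in \mathbb{R}^{n \times k}$ be a data matrix with singular values $\sigma_1 \ge \sigma_2 \ge \dots \ge \sigma_{\ell}$, where $\ell = \min(n, k)$ and $\ell \ge r$. Then $$\sum_{i=1}^{k} \min_{\hat{q}^{(i)} \in \mathcal{M}_r(V,H)} \|\hat{q}^{(i)} - q^{(i)}\|_2^2 \;\ge\; \sum_{i = p + r + 1}^{\ell} \sigma_i^2 ,$$ where the minimum is understood as an infimum and the right-hand side is an empty sum (equal to $0$) if $p + r \ge \ell$.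
   Context: $\|\cdot\|_2$ denotes the Euclidean norm. The singular values of $Q$ are listed in non-increasing order. In the paper's typical application $h$ is the quadratic feature map $z \mapsto (z_1z_1, z_1z_2, \dots, z_1 z_r, z_2 z_2, \dots, z_r z_r)^\top$ with $p = r(r+1)/2$, but the statement holds for an arbitrary map $h:\mathbb{R}^r\to\mathbb{R}^p$. *)

theory Defs
  imports "Jordan_Normal_Form.Char_Poly"
begin

text \<open>The eigenvalues
  with multiplicity are the roots of the (monic, real-split) characteristic polynomial.
  The list has length k; its first min(n,k) entries are the singular values
  sigma_1 >= ... >= sigma_l.\<close>
definition singular_values :: "real mat \<Rightarrow> real list" where
  "singular_values Q = map sqrt (THE xs. sorted_wrt (\<ge>) xs \<and>
      char_poly (transpose_mat Q * Q) = (\<Prod>a\<leftarrow>xs. [:- a, 1:]))"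

definition manifold_set :: "nat \<Rightarrow> real mat \<Rightarrow> real mat \<Rightarrow> (real vec \<Rightarrow> real vec) \<Rightarrow> real vec set" where
  "manifold_set r V W h = {V *\<^sub>v z + W *\<^sub>v h z | z. z \<in> carrier_vec r}"

definition sq_dist :: "nat \<Rightarrow> real vec \<Rightarrow> real vec \<Rightarrow> real" where
  "sq_dist n x y = (\<Sum>j<n. (x $ j - y $ j)^2)"

end

theory Submission
  imports Defs "Jordan_Normal_Form.Schur_Decomposition" "HOL-Combinatorics.List_Permutation"
    "Berlekamp_Zassenhaus.Mahler_Measure"
begin

(* Every point V z + W h(z) of the manifold equals [V W] y with y = (z, h(z)), so it lies in
   the column space of the n x (r + p) matrix [V W].  That space is spanned by a family
   f_1, ..., f_(r+p) of pairwise orthogonal vectors, each a unit vector or zero, read off from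
   the spectral decomposition of [V W]^T [V W]; by Bessel's inequality the squared distance
   from q_i to any point of the span is at least |q_i|^2 - sum_l <f_l, q_i>^2.

   Diagonalising Q^T Q = U diag(mu) U^T and letting e_j be the normalised columns of Q U, the
   sum of these residuals over i equals sum_j mu_j (1 - c_j) with c_j = sum_l <f_l, e_j>^2.
   Bessel's inequality, applied to both families, gives 0 <= c_j <= 1 and sum_j c_j <= r + p,
   and under these constraints the weighted sum is at least the sum of all eigenvalues mu_j
   but the r + p largest ones, i.e. of the squared singular values sigma_i^2 with i > p + r. *)

section \<open>Spectral theorem for real symmetric matrices\<close>

lemma real_symmetric_mat_complex_eigenvalue_real:
  fixes A :: "real mat"
  assumes A: "A \<in> carrier_mat k k" and sym: "transpose_mat A = A"
    and a: "eigenvalue (map_mat complex_of_real A) a"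
  shows "cnj a = a"
proof -
  obtain v where v: "v \<in> carrier_vec k" "v \<noteq> 0\<^sub>v k" "map_mat complex_of_real A *\<^sub>v v = a \<cdot>\<^sub>v v"
    using a A unfolding eigenvalue_def eigenvector_def by auto
  have Av: "(\<Sum>j<k. complex_of_real (A $$ (i,j)) * v $ j) = a * v $ i" if i: "i < k" for i
  proof -
    have "(map_mat complex_of_real A *\<^sub>v v) $ i = (\<Sum>j<k. complex_of_real (A $$ (i,j)) * v $ j)"
      using i A v(1) by (auto simp: scalar_prod_def lessThan_atLeast0 intro!: sum.cong)
    then show ?thesis using v i by simp
  qed
  have symA: "A $$ (i,j) = A $$ (j,i)" if "i < k" "j < k" for i j
    using sym A that by (metis carrier_matD index_transpose_mat(1))
  define N where "N = (\<Sum>i<k. cnj (v $ i) * v $ i)"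
  \<comment> \<open>\<open>s = v\<^sup>* A v\<close> equals \<open>a N\<close>, and it is real because \<open>A\<close> is real symmetric\<close>
  define s where "s = (\<Sum>i<k. cnj (v $ i) * (\<Sum>j<k. complex_of_real (A $$ (i,j)) * v $ j))"
  have "s = (\<Sum>i<k. cnj (v $ i) * (a * v $ i))" unfolding s_def
    by (rule sum.cong) (auto simp: Av)
  then have s_eq: "s = a * N" unfolding N_def
    by (simp add: sum_distrib_left mult.commute mult.left_commute)
  have "cnj s = (\<Sum>i<k. \<Sum>j<k. v $ i * complex_of_real (A $$ (i,j)) * cnj (v $ j))"
    unfolding s_def by (simp add: cnj_sum sum_distrib_left mult.assoc)
  also have "\<dots> = (\<Sum>j<k. \<Sum>i<k. v $ i * complex_of_real (A $$ (i,j)) * cnj (v $ j))"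
    by (rule sum.swap)
  also have "\<dots> = s" unfolding s_def
    by (auto simp: sum_distrib_left symA mult.commute mult.left_commute intro!: sum.cong)
  finally have "cnj s = s" .
  have N_real: "N = complex_of_real (\<Sum>i<k. (cmod (v $ i))^2)"
    unfolding N_def of_real_sum by (rule sum.cong[OF refl]) (metis complex_norm_square mult.commute)
  have "N \<noteq> 0"
  proof
    assume "N = 0"
    then have "(\<Sum>i<k. (cmod (v $ i))^2) = 0" using N_real by (metis of_real_eq_0_iff)
    then have "\<forall>i\<in>{..<k}. (cmod (v $ i))^2 = 0" by (subst (asm) sum_nonneg_eq_0_iff) auto
    then have "v = 0\<^sub>v k" using v(1) by (intro eq_vecI) auto
    with v(2) show False ..
  qed
  have "cnj a * N = a * N"
    using \<open>cnj s = s\<close> s_eq N_real by (metis complex_cnj_complex_of_real complex_cnj_mult)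
  then show ?thesis using \<open>N \<noteq> 0\<close> by simp
qed

lemma real_symmetric_mat_has_eigenvalue:
  fixes A :: "real mat"
  assumes A: "A \<in> carrier_mat k k" and sym: "transpose_mat A = A" and k: "0 < k"
  shows "\<exists>e. eigenvalue A e"
proof -
  define Ac where "Ac = map_mat complex_of_real A"
  have Ac: "Ac \<in> carrier_mat k k" using A by (simp add: Ac_def)
  obtain as where cp: "char_poly Ac = (\<Prod>a\<leftarrow>as. [:- a, 1:])" and "length as = k"
    using char_poly_factorized[OF Ac] by blast
  then obtain a where "a \<in> set as" using k by (cases as) auto
  then have root: "poly (char_poly Ac) a = 0"
    unfolding cp by (simp add: poly_prod_list_zero_iff)
  then have "cnj a = a"
    using real_symmetric_mat_complex_eigenvalue_real[OF A sym] eigenvalue_root_char_poly[OF Ac]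
    unfolding Ac_def by blast
  then have a_real: "a = complex_of_real (Re a)"
    by (metis Reals_cnj_iff complex_is_Real_iff of_real_Re)
  have "char_poly Ac = map_poly complex_of_real (char_poly A)"
    unfolding Ac_def using of_real_hom.char_poly_hom[OF A] by simp
  then have "poly (char_poly A) (Re a) = 0"
    using root a_real by (metis of_real_eq_0_iff of_real_hom.poly_map_poly)
  then show ?thesis using eigenvalue_root_char_poly[OF A] by blast
qed

lemma orthogonal_mat_of_normalized_cols:
  fixes ws :: "real vec list"
  assumes ws: "set ws \<subseteq> carrier_vec k" "corthogonal ws" "length ws = k"
  defines "W \<equiv> mat_of_cols k (map (\<lambda>w. (1 / sqrt (w \<bullet> w)) \<cdot>\<^sub>v w) ws)"
  shows "transpose_mat W * W = 1\<^sub>m k"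
proof (rule eq_matI)
  fix i j assume "i < dim_row (1\<^sub>m k)" "j < dim_col (1\<^sub>m k)"
  then have i: "i < k" and j: "j < k" by auto
  have ci: "ws ! i \<in> carrier_vec k" and cj: "ws ! j \<in> carrier_vec k" using ws i j by auto
  have pos: "ws ! i \<bullet> ws ! i > 0"
    using corthogonalD[OF ws(2), of i i] ws(3) i conjugate_square_ge_0_vec[of "ws ! i"] by simp
  have "(transpose_mat W * W) $$ (i, j)
      = (1 / sqrt (ws ! i \<bullet> ws ! i)) * (1 / sqrt (ws ! j \<bullet> ws ! j)) * (ws ! i \<bullet> ws ! j)"
    unfolding W_def using i j ws ci cj
    by (simp add: col_mat_of_cols smult_scalar_prod_distrib scalar_prod_smult_distrib)
  also have "\<dots> = (if i = j then 1 else 0)"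
  proof (cases "i = j")
    case True
    then show ?thesis using pos by (simp add: real_sqrt_mult[symmetric])
  next
    case False
    then show ?thesis using corthogonalD[OF ws(2), of i j] ws(3) i j by simp
  qed
  finally show "(transpose_mat W * W) $$ (i, j) = 1\<^sub>m k $$ (i, j)" using i j by simp
qed (use ws(3) in \<open>auto simp: W_def\<close>)

lemma unit_vec_extends_to_orthogonal_mat:
  fixes v :: "real vec"
  assumes v: "v \<in> carrier_vec k" and v1: "v \<bullet> v = 1"
  obtains W where "W \<in> carrier_mat k k" "transpose_mat W * W = 1\<^sub>m k" "col W 0 = v"
proof -
  have v0: "v \<noteq> 0\<^sub>v k" using v1 by auto
  have k: "0 < k" using v v0 by (cases k) auto
  interpret cof_vec_space k "TYPE(real)" .
  define b where "b = basis_completion v"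
  from basis_completion[OF v v0, folded b_def]
  have b: "set b \<subseteq> carrier_vec k" "distinct b" "\<not> lin_dep (set b)" "length b = k" "hd b = v"
    by auto
  then obtain vs where bv: "b = v # vs" using k by (cases b) auto
  define ws where "ws = gram_schmidt k b"
  from gram_schmidt_result[OF b(1-3) refl, folded ws_def]
  have ws: "set ws \<subseteq> carrier_vec k" "corthogonal ws" "length ws = k"
    by (auto simp: b(4))
  have "hd ws = v" using gram_schmidt_hd[OF v, of vs] unfolding ws_def bv .
  then have "ws ! 0 = v" using ws(3) k by (cases ws) auto
  define W where "W = mat_of_cols k (map (\<lambda>w. (1 / sqrt (w \<bullet> w)) \<cdot>\<^sub>v w) ws)"
  have "col W 0 = (1 / sqrt (v \<bullet> v)) \<cdot>\<^sub>v v"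
    unfolding W_def using ws k \<open>ws ! 0 = v\<close> by (subst col_mat_of_cols) auto
  then have "col W 0 = v" using v1 by simp
  moreover have "transpose_mat W * W = 1\<^sub>m k"
    unfolding W_def by (rule orthogonal_mat_of_normalized_cols[OF ws])
  moreover have "W \<in> carrier_mat k k"
    unfolding W_def using mat_of_cols_carrier(1) ws(3) by (metis length_map)
  ultimately show ?thesis using that by blast
qed

lemma real_symmetric_mat_has_unit_eigenvector:
  fixes A :: "real mat"
  assumes A: "A \<in> carrier_mat k k" and sym: "transpose_mat A = A" and k: "0 < k"
  obtains e v where "v \<in> carrier_vec k" "v \<bullet> v = 1" "A *\<^sub>v v = e \<cdot>\<^sub>v v"
proof -
  obtain e v where v: "v \<in> carrier_vec k" "v \<noteq> 0\<^sub>v k" "A *\<^sub>v v = e \<cdot>\<^sub>v v"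
    using real_symmetric_mat_has_eigenvalue[OF A sym k] A
    unfolding eigenvalue_def eigenvector_def by auto
  have pos: "v \<bullet> v > 0" using conjugate_square_greater_0_vec[OF v(1)] v(2) by simp
  define v1 where "v1 = (1 / sqrt (v \<bullet> v)) \<cdot>\<^sub>v v"
  have "v1 \<bullet> v1 = (1 / sqrt (v \<bullet> v)) * (1 / sqrt (v \<bullet> v)) * (v \<bullet> v)"
    unfolding v1_def using v(1) by (simp add: smult_scalar_prod_distrib scalar_prod_smult_distrib)
  then have "v1 \<bullet> v1 = 1" using pos by (simp add: real_sqrt_mult[symmetric])
  moreover have "A *\<^sub>v v1 = e \<cdot>\<^sub>v v1" unfolding v1_def using v A
    by (simp add: mult_mat_vec smult_smult_assoc mult.commute)
  moreover have "v1 \<in> carrier_vec k" unfolding v1_def using v by simp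
  ultimately show ?thesis using that by blast
qed

lemma symmetric_mat_block_diag_first_col:
  fixes A :: "'a :: comm_ring_1 mat"
  assumes A: "A \<in> carrier_mat (Suc n) (Suc n)" and sym: "transpose_mat A = A"
    and col0: "\<And>i. i < Suc n \<Longrightarrow> A $$ (i, 0) = (if i = 0 then e else 0)"
  defines "B \<equiv> mat n n (\<lambda>(i, j). A $$ (Suc i, Suc j))"
  shows "A = four_block_mat (mat 1 1 (\<lambda>_. e)) (0\<^sub>m 1 n) (0\<^sub>m n 1) B" and "transpose_mat B = B"
proof -
  have A_sym: "A $$ (i, j) = A $$ (j, i)" if "i < Suc n" "j < Suc n" for i j
    using sym A that by (metis carrier_matD index_transpose_mat(1))
  show "A = four_block_mat (mat 1 1 (\<lambda>_. e)) (0\<^sub>m 1 n) (0\<^sub>m n 1) B"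
  proof (rule eq_matI)
    fix i j assume "i < dim_row (four_block_mat (mat 1 1 (\<lambda>_. e)) (0\<^sub>m 1 n) (0\<^sub>m n 1) B)"
      "j < dim_col (four_block_mat (mat 1 1 (\<lambda>_. e)) (0\<^sub>m 1 n) (0\<^sub>m n 1) B)"
    then have i: "i < Suc n" and j: "j < Suc n" by (auto simp: B_def)
    show "A $$ (i, j) = four_block_mat (mat 1 1 (\<lambda>_. e)) (0\<^sub>m 1 n) (0\<^sub>m n 1) B $$ (i, j)"
      using col0[OF i] col0[OF j] A_sym[OF i j] i j by (cases i; cases j) (auto simp: B_def)
  qed (use A in \<open>auto simp: B_def\<close>)
  show "transpose_mat B = B" unfolding B_def by (rule eq_matI) (auto simp: A_sym)
qed

lemma real_symmetric_mat_deflation: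
  fixes A :: "real mat"
  assumes A: "A \<in> carrier_mat (Suc n) (Suc n)" and sym: "transpose_mat A = A"
  obtains W e B where "W \<in> carrier_mat (Suc n) (Suc n)" "transpose_mat W * W = 1\<^sub>m (Suc n)"
    and "B \<in> carrier_mat n n" "transpose_mat B = B"
    and "transpose_mat W * A * W = four_block_mat (mat 1 1 (\<lambda>_. e)) (0\<^sub>m 1 n) (0\<^sub>m n 1) B"
proof -
  let ?k = "Suc n"
  obtain e v where v: "v \<in> carrier_vec ?k" "v \<bullet> v = 1" and Av: "A *\<^sub>v v = e \<cdot>\<^sub>v v"
    using real_symmetric_mat_has_unit_eigenvector[OF A sym] by blast
  obtain W where W: "W \<in> carrier_mat ?k ?k" and WW: "transpose_mat W * W = 1\<^sub>m ?k"
    and W0: "col W 0 = v" using unit_vec_extends_to_orthogonal_mat[OF v] by blast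
  define A' where "A' = transpose_mat W * A * W"
  have A': "A' \<in> carrier_mat ?k ?k" unfolding A'_def using W A by auto
  have AW: "A * W \<in> carrier_mat ?k ?k" using A W by simp
  have "transpose_mat A' = transpose_mat (A * W) * W"
    unfolding A'_def using transpose_mult[OF _ AW, of "transpose_mat W"] W A
    by (simp add: assoc_mult_mat[of _ ?k ?k _ ?k _ ?k])
  also have "\<dots> = A'"
    unfolding A'_def transpose_mult[OF A W] sym using W A
    by (simp add: assoc_mult_mat[of _ ?k ?k _ ?k _ ?k])
  finally have A'_sym: "transpose_mat A' = A'" .
  have "A' $$ (i, 0) = (if i = 0 then e else 0)" if i: "i < ?k" for i
  proof -
    have "A' $$ (i, 0) = col W i \<bullet> col (A * W) 0"
      unfolding A'_def using i W A by (simp add: assoc_mult_mat[of _ ?k ?k _ ?k _ ?k])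
    also have "col (A * W) 0 = e \<cdot>\<^sub>v col W 0" by (subst col_mult2[OF A W]) (simp_all add: W0 Av)
    also have "col W i \<bullet> (e \<cdot>\<^sub>v col W 0) = e * (transpose_mat W * W) $$ (i, 0)"
      using i W by (simp add: scalar_prod_smult_distrib[of _ ?k])
    finally show ?thesis using WW i by simp
  qed
  note block = symmetric_mat_block_diag_first_col[OF A' A'_sym this]
  show ?thesis
    by (rule that[OF W WW _ block(2)]) (use block(1) in \<open>auto simp: A'_def\<close>)
qed

lemma orthogonal_block_diag_conj:
  fixes U D E :: "real mat"
  assumes U: "U \<in> carrier_mat n n" "transpose_mat U * U = 1\<^sub>m n" and D: "D \<in> carrier_mat n n"
    and E: "E \<in> carrier_mat 1 1"
  defines "U1 \<equiv> four_block_mat (1\<^sub>m 1) (0\<^sub>m 1 n) (0\<^sub>m n 1) U"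
  shows "transpose_mat U1 * U1 = 1\<^sub>m (Suc n)"
    and "four_block_mat E (0\<^sub>m 1 n) (0\<^sub>m n 1) (U * D * transpose_mat U)
      = U1 * four_block_mat E (0\<^sub>m 1 n) (0\<^sub>m n 1) D * transpose_mat U1"
proof -
  have U1_t: "transpose_mat U1 = four_block_mat (1\<^sub>m 1) (0\<^sub>m 1 n) (0\<^sub>m n 1) (transpose_mat U)"
    unfolding U1_def using U by (simp add: transpose_four_block_mat[of _ 1 1 _ n _ n])
  show "transpose_mat U1 * U1 = 1\<^sub>m (Suc n)"
    unfolding U1_t using U by (simp add: U1_def mult_four_block_mat[of _ 1 1 _ n _ n _ _ 1 _ n])
  show "four_block_mat E (0\<^sub>m 1 n) (0\<^sub>m n 1) (U * D * transpose_mat U)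
      = U1 * four_block_mat E (0\<^sub>m 1 n) (0\<^sub>m n 1) D * transpose_mat U1"
    unfolding U1_t using U D E by (simp add: U1_def mult_four_block_mat[of _ 1 1 _ n _ n _ _ 1 _ n])
qed

lemma orthogonal_mat_mult:
  fixes U V :: "'a :: comm_ring_1 mat"
  assumes U: "U \<in> carrier_mat n n" "transpose_mat U * U = 1\<^sub>m n"
    and V: "V \<in> carrier_mat n n" "transpose_mat V * V = 1\<^sub>m n"
  shows "transpose_mat (U * V) * (U * V) = 1\<^sub>m n"
proof -
  have "transpose_mat (U * V) * (U * V) = transpose_mat V * ((transpose_mat U * U) * V)"
    unfolding transpose_mult[OF U(1) V(1)] using U(1) V(1) by (simp add: assoc_mult_mat[of _ n n _ n _ n])
  then show ?thesis by (simp only: U(2) left_mult_one_mat[OF V(1)] V(2))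
qed

lemma orthogonal_conj_inverse:
  fixes W A C :: "real mat"
  assumes W: "W \<in> carrier_mat n n" "transpose_mat W * W = 1\<^sub>m n" and A: "A \<in> carrier_mat n n"
    and C: "transpose_mat W * A * W = C"
  shows "A = W * C * transpose_mat W"
proof -
  have "W * transpose_mat W = 1\<^sub>m n" using mat_mult_left_right_inverse[OF _ W(1) W(2)] W by simp
  then have "A = (W * transpose_mat W) * A * (W * transpose_mat W)" using A by simp
  also have "\<dots> = W * C * transpose_mat W"
    unfolding C[symmetric] using W A by (simp add: assoc_mult_mat[of _ n n _ n _ n])
  finally show ?thesis .
qed

theorem real_symmetric_mat_orthogonal_diagonalization:
  fixes A :: "real mat"
  assumes "A \<in> carrier_mat k k" "transpose_mat A = A"
  shows "\<exists>U D. U \<in> carrier_mat k k \<and> D \<in> carrier_mat k k \<and> transpose_mat U * U = 1\<^sub>m k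
     \<and> diagonal_mat D \<and> A = U * D * transpose_mat U"
  using assms
proof (induction k arbitrary: A)
  case 0
  then have "A = 1\<^sub>m 0 * 1\<^sub>m 0 * transpose_mat (1\<^sub>m 0)" by (intro eq_matI) auto
  then show ?case by (intro exI[of _ "1\<^sub>m 0"]) (auto simp: diagonal_mat_def)
next
  case (Suc n A)
  let ?k = "Suc n"
  have A: "A \<in> carrier_mat ?k ?k" using Suc by simp
  obtain W e B where W: "W \<in> carrier_mat ?k ?k" and WW: "transpose_mat W * W = 1\<^sub>m ?k"
    and B: "B \<in> carrier_mat n n" "transpose_mat B = B"
    and WAW: "transpose_mat W * A * W = four_block_mat (mat 1 1 (\<lambda>_. e)) (0\<^sub>m 1 n) (0\<^sub>m n 1) B"
    by (rule real_symmetric_mat_deflation[OF A Suc.prems(2)])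
  obtain U' D' where U': "U' \<in> carrier_mat n n" "transpose_mat U' * U' = 1\<^sub>m n"
    and D': "D' \<in> carrier_mat n n" "diagonal_mat D'" and B_eq: "B = U' * D' * transpose_mat U'"
    using Suc.IH[OF B] by blast
  define U1 where "U1 = four_block_mat (1\<^sub>m 1) (0\<^sub>m 1 n) (0\<^sub>m n 1) U'"
  define D where "D = four_block_mat (mat 1 1 (\<lambda>_. e)) (0\<^sub>m 1 n) (0\<^sub>m n 1) D'"
  define U where "U = W * U1"
  note U1_conj = orthogonal_block_diag_conj[where E = "mat 1 1 (\<lambda>_. e)",
    OF U' D'(1) mat_carrier, folded U1_def D_def]
  have U1: "U1 \<in> carrier_mat ?k ?k" unfolding U1_def using U' by auto
  have D: "D \<in> carrier_mat ?k ?k" unfolding D_def using D' by auto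
  have "A = W * (U1 * D * transpose_mat U1) * transpose_mat W"
    using orthogonal_conj_inverse[OF W WW A] WAW by (simp only: B_eq U1_conj(2))
  also have "\<dots> = U * D * transpose_mat U"
    using W U1 D by (simp add: U_def transpose_mult[OF W U1] assoc_mult_mat[of _ ?k ?k _ ?k _ ?k])
  finally have "A = U * D * transpose_mat U" .
  moreover have "transpose_mat U * U = 1\<^sub>m ?k"
    unfolding U_def by (rule orthogonal_mat_mult[OF W WW U1 U1_conj(1)])
  moreover have "diagonal_mat D"
    using D' unfolding D_def diagonal_mat_def by auto
  moreover have "U \<in> carrier_mat ?k ?k" unfolding U_def using W U1 by simp
  ultimately show ?case using D by blast
qed

section \<open>Orthonormal families\<close>

text \<open>A family of vectors of \<open>\<real>\<^sup>n\<close> is encoded by coordinate functions: \<open>f l i\<close> is the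
  \<open>i\<close>-th coordinate of the \<open>l\<close>-th vector, for \<open>l < N\<close> and \<open>i < n\<close>.\<close>

definition orthonormal_or_zero :: "nat \<Rightarrow> nat \<Rightarrow> (nat \<Rightarrow> nat \<Rightarrow> real) \<Rightarrow> bool" where
  "orthonormal_or_zero N n f \<longleftrightarrow>
     (\<forall>l<N. \<forall>l'<N. l \<noteq> l' \<longrightarrow> (\<Sum>i<n. f l i * f l' i) = 0)
     \<and> (\<forall>l<N. (\<Sum>i<n. (f l i)^2) = 1 \<or> (\<forall>i<n. f l i = 0))"

lemma orthonormal_or_zero_sum_sq_le_1:
  "orthonormal_or_zero N n f \<Longrightarrow> l < N \<Longrightarrow> (\<Sum>i<n. (f l i)^2) \<le> 1"
  unfolding orthonormal_or_zero_def by auto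

lemma orthogonal_family_normalize:
  fixes w :: "nat \<Rightarrow> nat \<Rightarrow> real"
  assumes w: "\<And>j j'. j < m \<Longrightarrow> j' < m \<Longrightarrow> (\<Sum>r<n. w j r * w j' r) = (if j = j' then \<mu> j else 0)"
  obtains e where "orthonormal_or_zero m n e"
    and "\<And>j r. j < m \<Longrightarrow> r < n \<Longrightarrow> w j r = sqrt (\<mu> j) * e j r"
    and "\<And>j. j < m \<Longrightarrow> \<mu> j \<noteq> 0 \<Longrightarrow> (\<Sum>r<n. (e j r)^2) = 1"
    and "\<And>j. j < m \<Longrightarrow> 0 \<le> \<mu> j"
proof
  define e where "e = (\<lambda>j r. if \<mu> j = 0 then 0 else w j r / sqrt (\<mu> j))"
  have norm: "\<mu> j = (\<Sum>r<n. (w j r)^2)" if "j < m" for j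
    using w[OF that that] by (simp add: power2_eq_square)
  show nonneg: "0 \<le> \<mu> j" if "j < m" for j
    unfolding norm[OF that] by (simp add: sum_nonneg)
  show "w j r = sqrt (\<mu> j) * e j r" if j: "j < m" and r: "r < n" for j r
  proof (cases "\<mu> j = 0")
    case True
    then have "(\<Sum>r<n. (w j r)^2) = 0" using norm[OF j] by simp
    then have "(w j r)^2 = 0" using r by (subst (asm) sum_nonneg_eq_0_iff) auto
    then show ?thesis by (simp add: e_def True)
  next
    case False
    then show ?thesis using nonneg[OF j] by (simp add: e_def)
  qed
  have e_orth: "(\<Sum>r<n. e j r * e j' r) = (if j = j' \<and> \<mu> j \<noteq> 0 then 1 else 0)"
    if j: "j < m" and j': "j' < m" for j j'
  proof (cases "\<mu> j = 0 \<or> \<mu> j' = 0")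
    case True
    then show ?thesis by (auto simp: e_def)
  next
    case False
    then have "(\<Sum>r<n. e j r * e j' r) = (\<Sum>r<n. w j r * w j' r) / (sqrt (\<mu> j) * sqrt (\<mu> j'))"
      by (simp add: e_def sum_divide_distrib)
    then show ?thesis
      using w[OF j j'] False nonneg[OF j] by (auto simp: real_sqrt_mult[symmetric])
  qed
  show "(\<Sum>r<n. (e j r)^2) = 1" if "j < m" "\<mu> j \<noteq> 0" for j
    using e_orth[of j j] that by (simp add: power2_eq_square)
  show "orthonormal_or_zero m n e"
    unfolding orthonormal_or_zero_def using e_orth by (auto simp: power2_eq_square e_def)
qed

text \<open>The hypothesis on \<open>u\<close> below is the completeness relation \<open>\<Sum>\<^sub>j u\<^sub>j u\<^sub>j\<^sup>T = I\<close>: the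
  vectors \<open>u\<^sub>j = u j\<close>, \<open>j < m\<close>, form an orthonormal basis of \<open>\<real>\<^sup>m\<close>.\<close>

lemma orthonormal_expansion:
  fixes u :: "nat \<Rightarrow> nat \<Rightarrow> real"
  assumes u: "\<And>i i'. i < m \<Longrightarrow> i' < m \<Longrightarrow> (\<Sum>j<m. u j i * u j i') = (if i = i' then 1 else 0)"
    and i: "i < m"
  shows "(\<Sum>j<m. (\<Sum>i'<m. g i' * u j i') * u j i) = g i"
proof -
  have "(\<Sum>j<m. (\<Sum>i'<m. g i' * u j i') * u j i) = (\<Sum>i'<m. g i' * (\<Sum>j<m. u j i * u j i'))"
    by (simp add: sum_distrib_left sum_distrib_right mult_ac) (rule sum.swap)
  also have "\<dots> = g i" using i by (simp add: u if_distrib[of "(*) _"] cong: if_cong)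
  finally show ?thesis .
qed

lemma parseval:
  fixes u :: "nat \<Rightarrow> nat \<Rightarrow> real"
  assumes u: "\<And>i i'. i < m \<Longrightarrow> i' < m \<Longrightarrow> (\<Sum>j<m. u j i * u j i') = (if i = i' then 1 else 0)"
  shows "(\<Sum>j<m. (\<Sum>i<m. g i * u j i)^2) = (\<Sum>i<m. (g i)^2)"
proof -
  define c where "c j = (\<Sum>i<m. g i * u j i)" for j
  have "(\<Sum>i<m. (g i)^2) = (\<Sum>i<m. g i * (\<Sum>j<m. c j * u j i))"
    unfolding c_def by (simp add: orthonormal_expansion[OF u] power2_eq_square)
  also have "\<dots> = (\<Sum>j<m. c j * (\<Sum>i<m. g i * u j i))"
    by (simp add: sum_distrib_left sum_distrib_right mult_ac) (rule sum.swap)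
  finally show ?thesis unfolding c_def by (simp add: power2_eq_square)
qed

lemma inner_orthogonal_combination:
  fixes f :: "nat \<Rightarrow> nat \<Rightarrow> real"
  assumes orth: "\<And>l l'. l < N \<Longrightarrow> l' < N \<Longrightarrow> l \<noteq> l' \<Longrightarrow> (\<Sum>i<n. f l i * f l' i) = 0"
    and l: "l < N"
  shows "(\<Sum>i<n. f l i * (\<Sum>l'<N. a l' * f l' i)) = a l * (\<Sum>i<n. (f l i)^2)"
proof -
  have "(\<Sum>i<n. f l i * (\<Sum>l'<N. a l' * f l' i)) = (\<Sum>l'<N. a l' * (\<Sum>i<n. f l i * f l' i))"
    by (simp add: sum_distrib_left sum_distrib_right mult_ac) (rule sum.swap)
  also have "\<dots> = (\<Sum>l'<N. if l' = l then a l * (\<Sum>i<n. (f l i)^2) else 0)"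
    using orth l by (intro sum.cong) (auto simp: power2_eq_square)
  finally show ?thesis using l by simp
qed

lemma sum_sq_diff_orthogonal_combination:
  fixes f :: "nat \<Rightarrow> nat \<Rightarrow> real"
  assumes orth: "\<And>l l'. l < N \<Longrightarrow> l' < N \<Longrightarrow> l \<noteq> l' \<Longrightarrow> (\<Sum>i<n. f l i * f l' i) = 0"
  shows "(\<Sum>i<n. (q i - (\<Sum>l<N. a l * f l i))^2)
       = (\<Sum>i<n. (q i)^2) - 2 * (\<Sum>l<N. a l * (\<Sum>i<n. f l i * q i))
         + (\<Sum>l<N. (a l)^2 * (\<Sum>i<n. (f l i)^2))"
proof -
  define s where "s i = (\<Sum>l<N. a l * f l i)" for i
  have "(\<Sum>i<n. (\<Sum>l<N. a l * f l i)^2) = (\<Sum>i<n. (\<Sum>l<N. a l * f l i) * s i)"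
    unfolding s_def by (simp add: power2_eq_square)
  also have "\<dots> = (\<Sum>l<N. a l * (\<Sum>i<n. f l i * s i))"
    by (simp add: sum_distrib_left sum_distrib_right mult_ac) (rule sum.swap)
  also have "\<dots> = (\<Sum>l<N. (a l)^2 * (\<Sum>i<n. (f l i)^2))"
  proof (intro sum.cong refl)
    fix l assume "l \<in> {..<N}"
    then have "(\<Sum>i<n. f l i * s i) = a l * (\<Sum>i<n. (f l i)^2)"
      unfolding s_def by (intro inner_orthogonal_combination[where N = N]) (use orth in auto)
    then show "a l * (\<Sum>i<n. f l i * s i) = (a l)^2 * (\<Sum>i<n. (f l i)^2)"
      by (simp add: power2_eq_square)
  qed
  finally have square: "(\<Sum>i<n. (\<Sum>l<N. a l * f l i)^2) = (\<Sum>l<N. (a l)^2 * (\<Sum>i<n. (f l i)^2))" .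
  have cross: "(\<Sum>i<n. q i * (\<Sum>l<N. a l * f l i)) = (\<Sum>l<N. a l * (\<Sum>i<n. f l i * q i))"
    by (simp add: sum_distrib_left sum_distrib_right mult_ac) (rule sum.swap)
  have "(\<Sum>i<n. (q i - (\<Sum>l<N. a l * f l i))^2)
      = (\<Sum>i<n. (q i)^2) - 2 * (\<Sum>i<n. q i * (\<Sum>l<N. a l * f l i)) + (\<Sum>i<n. (\<Sum>l<N. a l * f l i)^2)"
    by (simp add: power2_diff sum.distrib sum_subtractf sum_distrib_left mult.assoc)
  then show ?thesis unfolding square cross .
qed

lemma bessel_inequality:
  assumes f: "orthonormal_or_zero N n f"
  shows "(\<Sum>l<N. (\<Sum>i<n. f l i * q i)^2) \<le> (\<Sum>i<n. (q i)^2)"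
proof -
  let ?c = "\<lambda>l. \<Sum>i<n. f l i * q i"
  have unit: "(\<Sum>l<N. (?c l)^2 * (\<Sum>i<n. (f l i)^2)) = (\<Sum>l<N. (?c l)^2)"
  proof (intro sum.cong refl)
    fix l assume "l \<in> {..<N}"
    then show "(?c l)^2 * (\<Sum>i<n. (f l i)^2) = (?c l)^2"
      using f unfolding orthonormal_or_zero_def by (cases "(\<Sum>i<n. (f l i)^2) = 1") auto
  qed
  have "0 \<le> (\<Sum>i<n. (q i - (\<Sum>l<N. ?c l * f l i))^2)" by (simp add: sum_nonneg)
  also have "\<dots> = (\<Sum>i<n. (q i)^2) - 2 * (\<Sum>l<N. ?c l * ?c l) + (\<Sum>l<N. (?c l)^2 * (\<Sum>i<n. (f l i)^2))"
    using f unfolding orthonormal_or_zero_def by (intro sum_sq_diff_orthogonal_combination) auto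
  finally show ?thesis unfolding unit by (simp add: power2_eq_square)
qed

lemma sum_sq_diff_span_ge:
  assumes f: "orthonormal_or_zero N n f"
  shows "(\<Sum>i<n. (q i)^2) - (\<Sum>l<N. (\<Sum>i<n. f l i * q i)^2) \<le> (\<Sum>i<n. (q i - (\<Sum>l<N. a l * f l i))^2)"
proof -
  let ?c = "\<lambda>l. \<Sum>i<n. f l i * q i"
  have termwise: "0 \<le> (?c l)^2 + (a l)^2 * (\<Sum>i<n. (f l i)^2) - 2 * (a l * ?c l)" if "l < N" for l
  proof (cases "(\<Sum>i<n. (f l i)^2) = 1")
    case True
    have "0 \<le> (a l - ?c l)^2" by simp
    then show ?thesis using True by (simp add: power2_diff algebra_simps)
  next
    case False
    then show ?thesis using f that unfolding orthonormal_or_zero_def by auto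
  qed
  have "0 \<le> (\<Sum>l<N. (?c l)^2 + (a l)^2 * (\<Sum>i<n. (f l i)^2) - 2 * (a l * ?c l))"
    by (rule sum_nonneg) (use termwise in auto)
  moreover have "(\<Sum>i<n. (q i - (\<Sum>l<N. a l * f l i))^2)
       = (\<Sum>i<n. (q i)^2) - 2 * (\<Sum>l<N. a l * ?c l) + (\<Sum>l<N. (a l)^2 * (\<Sum>i<n. (f l i)^2))"
    using f unfolding orthonormal_or_zero_def by (intro sum_sq_diff_orthogonal_combination) auto
  ultimately show ?thesis by (simp add: sum.distrib sum_subtractf sum_distrib_left)
qed

lemma bessel_weights_bounds:
  fixes f e :: "nat \<Rightarrow> nat \<Rightarrow> real"
  assumes f: "orthonormal_or_zero m n f" and e: "orthonormal_or_zero k n e"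
  shows "\<And>j. j < k \<Longrightarrow>
      0 \<le> (\<Sum>l<m. (\<Sum>t<n. f l t * e j t)^2) \<and> (\<Sum>l<m. (\<Sum>t<n. f l t * e j t)^2) \<le> 1"
    and "(\<Sum>j<k. \<Sum>l<m. (\<Sum>t<n. f l t * e j t)^2) \<le> real m"
proof -
  show "0 \<le> (\<Sum>l<m. (\<Sum>t<n. f l t * e j t)^2) \<and> (\<Sum>l<m. (\<Sum>t<n. f l t * e j t)^2) \<le> 1"
    if "j < k" for j
    using bessel_inequality[OF f, of "e j"] orthonormal_or_zero_sum_sq_le_1[OF e that]
    by (simp add: sum_nonneg)
  have "(\<Sum>j<k. \<Sum>l<m. (\<Sum>t<n. f l t * e j t)^2) = (\<Sum>l<m. \<Sum>j<k. (\<Sum>t<n. e j t * f l t)^2)"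
    by (subst sum.swap) (simp add: mult.commute)
  also have "\<dots> \<le> (\<Sum>l<m. 1)"
    using bessel_inequality[OF e] orthonormal_or_zero_sum_sq_le_1[OF f]
    by (intro sum_mono) (meson order.trans lessThan_iff)
  finally show "(\<Sum>j<k. \<Sum>l<m. (\<Sum>t<n. f l t * e j t)^2) \<le> real m" by simp
qed

section \<open>Eigendecomposition of Gram matrices\<close>

lemma index_mult_mat_lessThan:
  fixes X Y :: "'a :: comm_ring mat"
  assumes "X \<in> carrier_mat a b" "Y \<in> carrier_mat b c" "i < a" "j < c"
  shows "(X * Y) $$ (i, j) = (\<Sum>l<b. X $$ (i, l) * Y $$ (l, j))"
  using assms by (auto simp: scalar_prod_def lessThan_atLeast0 intro!: sum.cong)

lemma index_mult_mat_vec_lessThan: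
  fixes X :: "'a :: comm_ring mat"
  assumes "X \<in> carrier_mat a b" "z \<in> carrier_vec b" "i < a"
  shows "(X *\<^sub>v z) $ i = (\<Sum>l<b. X $$ (i, l) * z $ l)"
  using assms by (auto simp: scalar_prod_def lessThan_atLeast0 intro!: sum.cong)

lemma char_poly_orthogonal_diagonalization:
  fixes A U D :: "real mat"
  assumes A: "A \<in> carrier_mat m m" and U: "U \<in> carrier_mat m m" and D: "D \<in> carrier_mat m m"
    and UU: "transpose_mat U * U = 1\<^sub>m m" and dD: "diagonal_mat D"
    and AUD: "A = U * D * transpose_mat U"
  shows "char_poly A = (\<Prod>j\<leftarrow>[0..<m]. [:- D $$ (j, j), 1:])"
proof -
  have "U * transpose_mat U = 1\<^sub>m m" using mat_mult_left_right_inverse[OF _ U UU] U by simp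
  then have "similar_mat_wit A D U (transpose_mat U)"
    unfolding similar_mat_wit_def Let_def using A D U UU AUD by auto
  then have "char_poly A = char_poly D" by (intro char_poly_similar) (auto simp: similar_mat_def)
  also have "\<dots> = (\<Prod>a\<leftarrow>diag_mat D. [:- a, 1:])"
    using dD D by (intro char_poly_upper_triangular) (auto simp: diagonal_mat_def upper_triangular_def)
  also have "diag_mat D = map (\<lambda>j. D $$ (j, j)) [0..<m]" unfolding diag_mat_def using D by simp
  finally show ?thesis by (simp add: comp_def)
qed

lemma gram_eigenbasis_image_orthogonal:
  fixes M U D :: "real mat"
  assumes M: "M \<in> carrier_mat n m" and U: "U \<in> carrier_mat m m" and D: "D \<in> carrier_mat m m"
    and UU: "transpose_mat U * U = 1\<^sub>m m" and dD: "diagonal_mat D"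
    and MM: "transpose_mat M * M = U * D * transpose_mat U"
    and j: "j < m" "j' < m"
  shows "(\<Sum>t<n. (M * U) $$ (t, j) * (M * U) $$ (t, j')) = (if j = j' then D $$ (j, j) else 0)"
proof -
  have MU: "M * U \<in> carrier_mat n m" using M U by simp
  have "transpose_mat (M * U) * (M * U) = transpose_mat U * (transpose_mat M * (M * U))"
    unfolding transpose_mult[OF M U] using M U by (intro assoc_mult_mat) auto
  also have "transpose_mat M * (M * U) = (transpose_mat M * M) * U"
    using M U by (intro assoc_mult_mat[symmetric]) auto
  also have "transpose_mat U * ((transpose_mat M * M) * U) = (transpose_mat U * U) * D * (transpose_mat U * U)"
    unfolding MM using U D by (simp add: assoc_mult_mat[of _ m m _ m _ m])
  finally have gram: "transpose_mat (M * U) * (M * U) = D" using UU D by simp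
  have "(\<Sum>t<n. (M * U) $$ (t, j) * (M * U) $$ (t, j'))
      = (\<Sum>t<n. transpose_mat (M * U) $$ (j, t) * (M * U) $$ (t, j'))"
    using j by (intro sum.cong) (use M U in auto)
  also have "\<dots> = (transpose_mat (M * U) * (M * U)) $$ (j, j')"
    by (rule index_mult_mat_lessThan[symmetric]) (use MU j in auto)
  finally show ?thesis using j dD D unfolding gram diagonal_mat_def by auto
qed

lemma gram_mat_eigen_decomposition:
  fixes M :: "real mat"
  assumes M: "M \<in> carrier_mat n m"
  obtains u \<mu> e where
    "\<And>i i'. i < m \<Longrightarrow> i' < m \<Longrightarrow> (\<Sum>j<m. u j i * u j i') = (if i = i' then 1 else 0)"
    "\<And>j t. j < m \<Longrightarrow> t < n \<Longrightarrow> (\<Sum>i<m. M $$ (t, i) * u j i) = sqrt (\<mu> j) * e j t"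
    "orthonormal_or_zero m n e"
    "\<And>j. j < m \<Longrightarrow> 0 \<le> \<mu> j"
    "\<And>j. j < m \<Longrightarrow> \<mu> j \<noteq> 0 \<Longrightarrow> (\<Sum>t<n. (e j t)^2) = 1"
    "char_poly (transpose_mat M * M) = (\<Prod>j\<leftarrow>[0..<m]. [:- \<mu> j, 1:])"
proof -
  define A where "A = transpose_mat M * M"
  have A: "A \<in> carrier_mat m m" unfolding A_def using M by simp
  have "transpose_mat A = A" unfolding A_def using transpose_mult[OF _ M, of "transpose_mat M"] M by simp
  then obtain U D where U: "U \<in> carrier_mat m m" and D: "D \<in> carrier_mat m m"
    and UU: "transpose_mat U * U = 1\<^sub>m m" and dD: "diagonal_mat D"
    and AUD: "A = U * D * transpose_mat U"
    using real_symmetric_mat_orthogonal_diagonalization[OF A] by blast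
  have UUt: "U * transpose_mat U = 1\<^sub>m m" using mat_mult_left_right_inverse[OF _ U UU] U by simp
  define u where "u = (\<lambda>j i. U $$ (i, j))"
  define \<mu> where "\<mu> = (\<lambda>j. D $$ (j, j))"
  define w where "w = (\<lambda>j t. (M * U) $$ (t, j))"
  have w_orth: "(\<Sum>t<n. w j t * w j' t) = (if j = j' then \<mu> j else 0)" if "j < m" "j' < m" for j j'
    unfolding w_def \<mu>_def using gram_eigenbasis_image_orthogonal[OF M U D UU dD AUD[unfolded A_def]] that .
  obtain e where e: "orthonormal_or_zero m n e"
    "\<And>j r. j < m \<Longrightarrow> r < n \<Longrightarrow> w j r = sqrt (\<mu> j) * e j r"
    "\<And>j. j < m \<Longrightarrow> \<mu> j \<noteq> 0 \<Longrightarrow> (\<Sum>r<n. (e j r)^2) = 1"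
    "\<And>j. j < m \<Longrightarrow> 0 \<le> \<mu> j"
    by (rule orthogonal_family_normalize[where m = m and n = n and w = w and \<mu> = \<mu>]) (auto simp: w_orth)
  have "(\<Sum>j<m. u j i * u j i') = (if i = i' then 1 else 0)" if "i < m" "i' < m" for i i'
  proof -
    have "(\<Sum>j<m. u j i * u j i') = (\<Sum>j<m. U $$ (i, j) * transpose_mat U $$ (j, i'))"
      unfolding u_def using that U by (intro sum.cong) auto
    also have "\<dots> = (U * transpose_mat U) $$ (i, i')"
      by (rule index_mult_mat_lessThan[symmetric]) (use U that in auto)
    finally show ?thesis using UUt that by simp
  qed
  moreover have "(\<Sum>i<m. M $$ (t, i) * u j i) = sqrt (\<mu> j) * e j t" if "j < m" "t < n" for j t
    using e(2)[OF that] that M U unfolding w_def u_def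
    by (subst (asm) index_mult_mat_lessThan) auto
  moreover have "char_poly (transpose_mat M * M) = (\<Prod>j\<leftarrow>[0..<m]. [:- \<mu> j, 1:])"
    unfolding A_def[symmetric] \<mu>_def by (rule char_poly_orthogonal_diagonalization[OF A U D UU dD AUD])
  ultimately show ?thesis using that e by blast
qed

lemma sum_sq_transpose_mult_eq:
  fixes Q :: "real mat" and u e :: "nat \<Rightarrow> nat \<Rightarrow> real"
  assumes u: "\<And>i i'. i < k \<Longrightarrow> i' < k \<Longrightarrow> (\<Sum>j<k. u j i * u j i') = (if i = i' then 1 else 0)"
    and Qu: "\<And>j t. j < k \<Longrightarrow> t < n \<Longrightarrow> (\<Sum>i<k. Q $$ (t, i) * u j i) = sqrt (\<mu> j) * e j t"
    and \<mu>: "\<And>j. j < k \<Longrightarrow> 0 \<le> \<mu> j"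
  shows "(\<Sum>i<k. (\<Sum>t<n. g t * Q $$ (t, i))^2) = (\<Sum>j<k. \<mu> j * (\<Sum>t<n. g t * e j t)^2)"
proof -
  have coeff: "(\<Sum>i<k. (\<Sum>t<n. g t * Q $$ (t, i)) * u j i) = sqrt (\<mu> j) * (\<Sum>t<n. g t * e j t)"
    if j: "j < k" for j
  proof -
    have "(\<Sum>i<k. (\<Sum>t<n. g t * Q $$ (t, i)) * u j i) = (\<Sum>t<n. g t * (\<Sum>i<k. Q $$ (t, i) * u j i))"
      by (simp add: sum_distrib_left sum_distrib_right mult_ac) (rule sum.swap)
    also have "\<dots> = (\<Sum>t<n. g t * (sqrt (\<mu> j) * e j t))"
      by (intro sum.cong) (simp_all add: Qu j)
    finally show ?thesis by (simp add: sum_distrib_left mult_ac)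
  qed
  have "(\<Sum>i<k. (\<Sum>t<n. g t * Q $$ (t, i))^2) = (\<Sum>j<k. (\<Sum>i<k. (\<Sum>t<n. g t * Q $$ (t, i)) * u j i)^2)"
    using parseval[OF u] by simp
  also have "\<dots> = (\<Sum>j<k. \<mu> j * (\<Sum>t<n. g t * e j t)^2)"
    by (intro sum.cong) (simp_all add: coeff \<mu> power_mult_distrib)
  finally show ?thesis .
qed

lemma sum_sq_residual_eq_weighted_sum:
  fixes Q :: "real mat" and u e f :: "nat \<Rightarrow> nat \<Rightarrow> real"
  assumes u: "\<And>i i'. i < k \<Longrightarrow> i' < k \<Longrightarrow> (\<Sum>j<k. u j i * u j i') = (if i = i' then 1 else 0)"
    and Qu: "\<And>j t. j < k \<Longrightarrow> t < n \<Longrightarrow> (\<Sum>i<k. Q $$ (t, i) * u j i) = sqrt (\<mu> j) * e j t"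
    and \<mu>: "\<And>j. j < k \<Longrightarrow> 0 \<le> \<mu> j"
    and e: "\<And>j. j < k \<Longrightarrow> \<mu> j \<noteq> 0 \<Longrightarrow> (\<Sum>t<n. (e j t)^2) = 1"
  shows "(\<Sum>i<k. (\<Sum>t<n. (Q $$ (t, i))^2) - (\<Sum>l<m. (\<Sum>t<n. f l t * Q $$ (t, i))^2))
       = (\<Sum>j<k. \<mu> j * (1 - (\<Sum>l<m. (\<Sum>t<n. f l t * e j t)^2)))"
proof -
  note transpose = sum_sq_transpose_mult_eq[where n = n, OF u Qu \<mu>]
  have row: "(\<Sum>i<k. (Q $$ (t, i))^2) = (\<Sum>j<k. \<mu> j * (e j t)^2)" if "t < n" for t
    using transpose[where g = "\<lambda>t'. if t' = t then 1 else 0"] that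
    by (simp add: if_distrib[of "\<lambda>x. x * _"] cong: if_cong)
  have "(\<Sum>i<k. \<Sum>t<n. (Q $$ (t, i))^2) = (\<Sum>t<n. \<Sum>j<k. \<mu> j * (e j t)^2)"
    by (subst sum.swap) (simp add: row)
  also have "\<dots> = (\<Sum>j<k. \<mu> j * (\<Sum>t<n. (e j t)^2))"
    by (subst sum.swap) (simp add: sum_distrib_left)
  also have "\<dots> = (\<Sum>j<k. \<mu> j)"
    using e by (intro sum.cong) fastforce+
  finally have rows: "(\<Sum>i<k. \<Sum>t<n. (Q $$ (t, i))^2) = (\<Sum>j<k. \<mu> j)" .
  have "(\<Sum>i<k. \<Sum>l<m. (\<Sum>t<n. f l t * Q $$ (t, i))^2)
      = (\<Sum>l<m. \<Sum>j<k. \<mu> j * (\<Sum>t<n. f l t * e j t)^2)"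
    by (subst sum.swap) (simp add: transpose)
  also have "\<dots> = (\<Sum>j<k. \<mu> j * (\<Sum>l<m. (\<Sum>t<n. f l t * e j t)^2))"
    by (subst sum.swap) (simp add: sum_distrib_left)
  finally show ?thesis
    using rows by (simp add: sum_subtractf right_diff_distrib)
qed

section \<open>Tail sums of squared singular values\<close>

lemma sorted_tail_sum_le_weighted_sum:
  fixes lam c :: "nat \<Rightarrow> real"
  assumes mono: "\<And>i j. i \<le> j \<Longrightarrow> j < k \<Longrightarrow> lam j \<le> lam i"
    and lam: "\<And>i. i < k \<Longrightarrow> 0 \<le> lam i"
    and c: "\<And>i. i < k \<Longrightarrow> 0 \<le> c i \<and> c i \<le> 1"
    and c_sum: "(\<Sum>i<k. c i) \<le> real m"
  shows "(\<Sum>i\<in>{m..<k}. lam i) \<le> (\<Sum>i<k. lam i * (1 - c i))"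
proof (cases "m < k")
  case False
  then have "{m..<k} = {}" by auto
  moreover have "0 \<le> (\<Sum>i<k. lam i * (1 - c i))"
    by (rule sum_nonneg) (use lam c in auto)
  ultimately show ?thesis by simp
next
  case True
  define t where "t = lam m" \<comment> \<open>every term is compared with this threshold\<close>
  have split: "(\<Sum>i<k. g i) = (\<Sum>i<m. g i) + (\<Sum>i\<in>{m..<k}. g i)" for g :: "nat \<Rightarrow> real"
    using sum.atLeastLessThan_concat[of 0 m k g] True by (simp add: atLeast0LessThan)
  have "(\<Sum>i<m. t * (1 - c i)) \<le> (\<Sum>i<m. lam i * (1 - c i))"
    by (rule sum_mono) (use True c mono t_def in \<open>auto intro!: mult_right_mono\<close>)
  moreover have "(\<Sum>i\<in>{m..<k}. lam i * c i) \<le> (\<Sum>i\<in>{m..<k}. t * c i)"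
    by (rule sum_mono) (use True c mono t_def in \<open>auto intro!: mult_right_mono\<close>)
  moreover have "t * (\<Sum>i<k. c i) \<le> t * real m"
    using lam[OF True] c_sum unfolding t_def by (simp add: mult_left_mono)
  ultimately show ?thesis
    using split[of c] split[of "\<lambda>i. lam i * (1 - c i)"]
    by (simp add: algebra_simps sum_subtractf sum_distrib_left sum.distrib)
qed

lemma tail_sum_le_weighted_sum:
  fixes \<mu> c :: "nat \<Rightarrow> real" and xs :: "real list"
  assumes sorted: "sorted_wrt (\<ge>) xs" and xs: "mset xs = mset (map \<mu> [0..<k])"
    and \<mu>: "\<And>j. j < k \<Longrightarrow> 0 \<le> \<mu> j"
    and c: "\<And>j. j < k \<Longrightarrow> 0 \<le> c j \<and> c j \<le> 1"
    and c_sum: "(\<Sum>j<k. c j) \<le> real m"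
  shows "(\<Sum>i\<in>{m..<k}. xs ! i) \<le> (\<Sum>j<k. \<mu> j * (1 - c j))"
proof -
  have len: "length xs = k" using mset_eq_length[OF xs] by simp
  obtain \<pi> where \<pi>: "bij_betw \<pi> {..<k} {..<k}"
    and xs_\<pi>': "\<And>i. i < k \<Longrightarrow> xs ! i = map \<mu> [0..<k] ! \<pi> i"
    using permutation_Ex_bij[OF xs] len by auto
  have \<pi>_lt: "\<pi> i < k" if "i < k" for i using \<pi> that by (meson bij_betwE lessThan_iff)
  have xs_\<pi>: "xs ! i = \<mu> (\<pi> i)" if "i < k" for i using xs_\<pi>'[OF that] \<pi>_lt[OF that] by simp
  have "(\<Sum>i\<in>{m..<k}. xs ! i) \<le> (\<Sum>i<k. xs ! i * (1 - c (\<pi> i)))"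
  proof (rule sorted_tail_sum_le_weighted_sum)
    show "xs ! j \<le> xs ! i" if "i \<le> j" "j < k" for i j
      using sorted len that by (metis order.refl le_neq_implies_less sorted_wrt_nth_less)
    show "0 \<le> xs ! i" if "i < k" for i using xs_\<pi>[OF that] \<mu>[OF \<pi>_lt[OF that]] by simp
    show "0 \<le> c (\<pi> i) \<and> c (\<pi> i) \<le> 1" if "i < k" for i using c \<pi>_lt[OF that] by simp
    show "(\<Sum>i<k. c (\<pi> i)) \<le> real m"
      using c_sum sum.reindex_bij_betw[OF \<pi>, of c] by simp
  qed
  also have "\<dots> = (\<Sum>j<k. \<mu> j * (1 - c j))"
    using sum.reindex_bij_betw[OF \<pi>, of "\<lambda>j. \<mu> j * (1 - c j)"] xs_\<pi> by simp
  finally show ?thesis .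
qed

lemma sorted_roots_of_linear_factors:
  fixes p :: "real poly"
  assumes p: "p = (\<Prod>a\<leftarrow>as. [:- a, 1:])"
  defines "xs \<equiv> THE xs. sorted_wrt (\<ge>) xs \<and> p = (\<Prod>a\<leftarrow>xs. [:- a, 1:])"
  shows "sorted_wrt (\<ge>) xs" and "mset xs = mset as"
proof -
  define ys where "ys = rev (sort as)"
  have ys: "sorted_wrt (\<ge>) ys \<and> p = (\<Prod>a\<leftarrow>ys. [:- a, 1:])"
    unfolding ys_def p by (simp add: sorted_wrt_rev prod_mset_prod_list[symmetric])
  have "xs = ys" unfolding xs_def
  proof (rule the_equality)
    fix zs assume zs: "sorted_wrt (\<ge>) zs \<and> p = (\<Prod>a\<leftarrow>zs. [:- a, 1:])"
    then have "mset zs = mset ys" using ys reconstruct_poly_monic_defines_mset by metis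
    moreover have "sorted (rev zs)" "sorted (rev ys)" using zs ys by (simp_all add: sorted_wrt_rev)
    ultimately show "zs = ys" by (metis mset_rev properties_for_sort rev_rev_ident)
  qed (fact ys)
  then show "sorted_wrt (\<ge>) xs" "mset xs = mset as" using ys by (simp_all add: ys_def)
qed

lemma singular_values_sq_sorted_eigenvalues:
  fixes Q :: "real mat"
  assumes cp: "char_poly (transpose_mat Q * Q) = (\<Prod>j\<leftarrow>[0..<k]. [:- \<mu> j, 1:])"
    and \<mu>: "\<And>j. j < k \<Longrightarrow> 0 \<le> \<mu> j"
  obtains xs where "sorted_wrt (\<ge>) xs" "mset xs = mset (map \<mu> [0..<k])"
    and "\<And>j. j < k \<Longrightarrow> (singular_values Q ! j)^2 = xs ! j"
proof
  define xs where "xs = (THE xs. sorted_wrt (\<ge>) xs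
    \<and> char_poly (transpose_mat Q * Q) = (\<Prod>a\<leftarrow>xs. [:- a, 1:]))"
  have "char_poly (transpose_mat Q * Q) = (\<Prod>a\<leftarrow>map \<mu> [0..<k]. [:- a, 1:])"
    unfolding cp by (simp add: comp_def)
  note xs = sorted_roots_of_linear_factors[OF this, folded xs_def]
  show "sorted_wrt (\<ge>) xs" "mset xs = mset (map \<mu> [0..<k])" by (fact xs)+
  have len: "length xs = k" using mset_eq_length[OF xs(2)] by simp
  show "(singular_values Q ! j)^2 = xs ! j" if "j < k" for j
  proof -
    have "xs ! j \<in> set (map \<mu> [0..<k])"
      using that len xs(2) by (metis nth_mem set_mset_mset)
    then have "0 \<le> xs ! j" using \<mu> by auto
    then show ?thesis using that len unfolding singular_values_def xs_def[symmetric] by simp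
  qed
qed

lemma tail_singular_values_le_residual:
  fixes Q :: "real mat" and f :: "nat \<Rightarrow> nat \<Rightarrow> real"
  assumes Q: "Q \<in> carrier_mat n k" and f: "orthonormal_or_zero m n f"
  shows "(\<Sum>j\<in>{m..<k}. (singular_values Q ! j)^2)
    \<le> (\<Sum>i<k. (\<Sum>t<n. (col Q i $ t)^2) - (\<Sum>l<m. (\<Sum>t<n. f l t * col Q i $ t)^2))"
proof -
  obtain u \<mu> e where
    u: "\<And>i i'. i < k \<Longrightarrow> i' < k \<Longrightarrow> (\<Sum>j<k. u j i * u j i') = (if i = i' then 1 else 0)"
    and Qu: "\<And>j t. j < k \<Longrightarrow> t < n \<Longrightarrow> (\<Sum>i<k. Q $$ (t, i) * u j i) = sqrt (\<mu> j) * e j t"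
    and e: "orthonormal_or_zero k n e"
    and \<mu>: "\<And>j. j < k \<Longrightarrow> 0 \<le> \<mu> j"
    and e_unit: "\<And>j. j < k \<Longrightarrow> \<mu> j \<noteq> 0 \<Longrightarrow> (\<Sum>t<n. (e j t)^2) = 1"
    and cp: "char_poly (transpose_mat Q * Q) = (\<Prod>j\<leftarrow>[0..<k]. [:- \<mu> j, 1:])"
    by (rule gram_mat_eigen_decomposition[OF Q]) blast
  obtain xs where xs: "sorted_wrt (\<ge>) xs" "mset xs = mset (map \<mu> [0..<k])"
    and sv: "\<And>j. j < k \<Longrightarrow> (singular_values Q ! j)^2 = xs ! j"
    using singular_values_sq_sorted_eigenvalues[OF cp \<mu>] by metis
  have "(\<Sum>j\<in>{m..<k}. (singular_values Q ! j)^2) = (\<Sum>j\<in>{m..<k}. xs ! j)" using sv by simp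
  also have "\<dots> \<le> (\<Sum>j<k. \<mu> j * (1 - (\<Sum>l<m. (\<Sum>t<n. f l t * e j t)^2)))"
    using tail_sum_le_weighted_sum[OF xs \<mu> bessel_weights_bounds[OF f e]] .
  also have "\<dots> = (\<Sum>i<k. (\<Sum>t<n. (Q $$ (t, i))^2) - (\<Sum>l<m. (\<Sum>t<n. f l t * Q $$ (t, i))^2))"
    by (rule sum_sq_residual_eq_weighted_sum[symmetric, OF u Qu \<mu> e_unit])
  also have "\<dots> = (\<Sum>i<k. (\<Sum>t<n. (col Q i $ t)^2) - (\<Sum>l<m. (\<Sum>t<n. f l t * col Q i $ t)^2))"
    using Q by (auto intro!: sum.cong)
  finally show ?thesis .
qed

section \<open>Distance to the manifold\<close>

definition append_cols :: "'a :: zero mat \<Rightarrow> 'a mat \<Rightarrow> 'a mat" where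
  "append_cols A B = four_block_mat A B (0\<^sub>m 0 (dim_col A)) (0\<^sub>m 0 (dim_col B))"

lemma append_cols_carrier:
  "A \<in> carrier_mat n a \<Longrightarrow> B \<in> carrier_mat n b \<Longrightarrow> append_cols A B \<in> carrier_mat n (a + b)"
  unfolding append_cols_def by auto

lemma append_cols_mult_append_vec:
  fixes A B :: "'a :: comm_ring mat"
  assumes "A \<in> carrier_mat n a" "B \<in> carrier_mat n b" "z \<in> carrier_vec a" "w \<in> carrier_vec b"
  shows "append_cols A B *\<^sub>v (z @\<^sub>v w) = A *\<^sub>v z + B *\<^sub>v w"
proof -
  have "append_cols A B = four_block_mat A B (0\<^sub>m 0 a) (0\<^sub>m 0 b)"
    unfolding append_cols_def using assms by auto
  then have "append_cols A B *\<^sub>v (z @\<^sub>v w)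
      = (A *\<^sub>v z + B *\<^sub>v w) @\<^sub>v (0\<^sub>m 0 a *\<^sub>v z + 0\<^sub>m 0 b *\<^sub>v w)"
    using four_block_mat_mult_vec[OF assms(1,2) _ _ assms(3,4), of "0\<^sub>m 0 a" 0 "0\<^sub>m 0 b"] by simp
  also have "\<dots> = A *\<^sub>v z + B *\<^sub>v w" using assms by (intro eq_vecI) auto
  finally show ?thesis .
qed

lemma manifold_set_subset_column_space:
  assumes V: "V \<in> carrier_mat n r" and W: "W \<in> carrier_mat n p"
    and h: "\<And>z. z \<in> carrier_vec r \<Longrightarrow> h z \<in> carrier_vec p"
  shows "manifold_set r V W h \<subseteq> {append_cols V W *\<^sub>v y | y. y \<in> carrier_vec (r + p)}"
proof
  fix x assume "x \<in> manifold_set r V W h"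
  then obtain z where z: "z \<in> carrier_vec r" and x: "x = V *\<^sub>v z + W *\<^sub>v h z"
    unfolding manifold_set_def by blast
  then have "x = append_cols V W *\<^sub>v (z @\<^sub>v h z)"
    using append_cols_mult_append_vec[OF V W z h[OF z]] by simp
  moreover have "z @\<^sub>v h z \<in> carrier_vec (r + p)" using z h by blast
  ultimately show "x \<in> {append_cols V W *\<^sub>v y | y. y \<in> carrier_vec (r + p)}" by blast
qed

lemma column_space_orthonormal_or_zero_spanning:
  fixes M :: "real mat"
  assumes M: "M \<in> carrier_mat n m"
  obtains f where "orthonormal_or_zero m n f"
    and "\<And>y. y \<in> carrier_vec m \<Longrightarrow> \<exists>a. \<forall>t<n. (M *\<^sub>v y) $ t = (\<Sum>l<m. a l * f l t)"
proof -
  obtain u \<mu> e where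
    u: "\<And>i i'. i < m \<Longrightarrow> i' < m \<Longrightarrow> (\<Sum>j<m. u j i * u j i') = (if i = i' then 1 else 0)"
    and Mu: "\<And>j t. j < m \<Longrightarrow> t < n \<Longrightarrow> (\<Sum>i<m. M $$ (t, i) * u j i) = sqrt (\<mu> j) * e j t"
    and e: "orthonormal_or_zero m n e"
    by (rule gram_mat_eigen_decomposition[OF M]) blast
  show ?thesis
  proof (rule that[OF e])
    fix y :: "real vec" assume y: "y \<in> carrier_vec m"
    define a where "a l = (\<Sum>s<m. y $ s * u l s) * sqrt (\<mu> l)" for l
    have "(M *\<^sub>v y) $ t = (\<Sum>l<m. a l * e l t)" if t: "t < n" for t
    proof -
      have "(M *\<^sub>v y) $ t = (\<Sum>s<m. M $$ (t, s) * (\<Sum>l<m. (\<Sum>s'<m. y $ s' * u l s') * u l s))"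
        using index_mult_mat_vec_lessThan[OF M y t] by (simp add: orthonormal_expansion[OF u])
      also have "\<dots> = (\<Sum>l<m. (\<Sum>s'<m. y $ s' * u l s') * (\<Sum>s<m. M $$ (t, s) * u l s))"
        by (simp add: sum_distrib_left sum_distrib_right mult_ac) (rule sum.swap)
      also have "\<dots> = (\<Sum>l<m. a l * e l t)"
        unfolding a_def by (intro sum.cong) (simp_all add: Mu t)
      finally show ?thesis .
    qed
    then show "\<exists>a. \<forall>t<n. (M *\<^sub>v y) $ t = (\<Sum>l<m. a l * e l t)" by blast
  qed
qed

lemma residual_le_Inf_sq_dist:
  fixes q :: "real vec" and f :: "nat \<Rightarrow> nat \<Rightarrow> real"
  assumes f: "orthonormal_or_zero m n f"
    and span: "\<And>x. x \<in> S \<Longrightarrow> \<exists>a. \<forall>t<n. x $ t = (\<Sum>l<m. a l * f l t)"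
    and "S \<noteq> {}"
  shows "(\<Sum>t<n. (q $ t)^2) - (\<Sum>l<m. (\<Sum>t<n. f l t * q $ t)^2) \<le> Inf {sq_dist n x q | x. x \<in> S}"
proof (rule cInf_greatest)
  show "{sq_dist n x q | x. x \<in> S} \<noteq> {}" using \<open>S \<noteq> {}\<close> by blast
next
  fix d assume "d \<in> {sq_dist n x q | x. x \<in> S}"
  then obtain x a where d: "d = sq_dist n x q" and x: "\<And>t. t < n \<Longrightarrow> x $ t = (\<Sum>l<m. a l * f l t)"
    using span by blast
  have "d = (\<Sum>t<n. (q $ t - (\<Sum>l<m. a l * f l t))^2)"
    unfolding d sq_dist_def by (intro sum.cong) (simp_all add: x power2_commute)
  then show "(\<Sum>t<n. (q $ t)^2) - (\<Sum>l<m. (\<Sum>t<n. f l t * q $ t)^2) \<le> d"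
    using sum_sq_diff_span_ge[OF f] by simp
qed

lemma residual_le_Inf_sq_dist_manifold_set:
  fixes f :: "nat \<Rightarrow> nat \<Rightarrow> real"
  assumes V: "V \<in> carrier_mat n r" and W: "W \<in> carrier_mat n p"
    and h: "\<And>z. z \<in> carrier_vec r \<Longrightarrow> h z \<in> carrier_vec p"
    and f: "orthonormal_or_zero (r + p) n f"
    and span: "\<And>y. y \<in> carrier_vec (r + p) \<Longrightarrow>
      \<exists>a. \<forall>t<n. (append_cols V W *\<^sub>v y) $ t = (\<Sum>l<r + p. a l * f l t)"
  shows "(\<Sum>t<n. (q $ t)^2) - (\<Sum>l<r + p. (\<Sum>t<n. f l t * q $ t)^2)
    \<le> Inf {sq_dist n x q | x. x \<in> manifold_set r V W h}"
proof (rule residual_le_Inf_sq_dist[OF f])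
  show "\<exists>a. \<forall>t<n. x $ t = (\<Sum>l<r + p. a l * f l t)" if "x \<in> manifold_set r V W h" for x
    using manifold_set_subset_column_space[where h = h, OF V W h] that span by blast
  show "manifold_set r V W h \<noteq> {}" unfolding manifold_set_def using zero_carrier_vec by blast
qed

theorem proposition4p1:
  fixes n r p k :: nat and V W Q :: "real mat" and h :: "real vec \<Rightarrow> real vec"
  assumes "0 < r" and "r \<le> n" and "r \<le> p"
    and "V \<in> carrier_mat n r" and "W \<in> carrier_mat n p"
    and "\<And>z. z \<in> carrier_vec r \<Longrightarrow> h z \<in> carrier_vec p"
    and "Q \<in> carrier_mat n k"
    and "r \<le> min n k"
  shows "(\<Sum>i<k. Inf {sq_dist n x (col Q i) | x. x \<in> manifold_set r V W h})
           \<ge> (\<Sum>i\<in>{p + r + 1 .. min n k}. (singular_values Q ! (i - 1))^2)"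
proof -
  have V: "V \<in> carrier_mat n r" and W: "W \<in> carrier_mat n p" and Q: "Q \<in> carrier_mat n k"
    and h: "\<And>z. z \<in> carrier_vec r \<Longrightarrow> h z \<in> carrier_vec p" using assms by auto
  obtain f where f: "orthonormal_or_zero (r + p) n f"
    and span: "\<And>y. y \<in> carrier_vec (r + p) \<Longrightarrow>
      \<exists>a. \<forall>t<n. (append_cols V W *\<^sub>v y) $ t = (\<Sum>l<r + p. a l * f l t)"
    by (rule column_space_orthonormal_or_zero_spanning[OF append_cols_carrier[OF V W]]) blast
  have "(\<Sum>i\<in>{p + r + 1 .. min n k}. (singular_values Q ! (i - 1))^2)
      = (\<Sum>j\<in>{r + p..<min n k}. (singular_values Q ! j)^2)"
    by (rule sum.reindex_bij_witness[of _ Suc "\<lambda>i. i - 1"]) auto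
  also have "\<dots> \<le> (\<Sum>j\<in>{r + p..<k}. (singular_values Q ! j)^2)"
    by (rule sum_mono2) auto
  also have "\<dots> \<le> (\<Sum>i<k. (\<Sum>t<n. (col Q i $ t)^2) - (\<Sum>l<r + p. (\<Sum>t<n. f l t * col Q i $ t)^2))"
    by (rule tail_singular_values_le_residual[OF Q f])
  also have "\<dots> \<le> (\<Sum>i<k. Inf {sq_dist n x (col Q i) | x. x \<in> manifold_set r V W h})"
    by (intro sum_mono residual_le_Inf_sq_dist_manifold_set[OF V W h f span])
  finally show ?thesis .
qed

end
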